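(* Given two finite-valued logics $\mathbf{M}_1$ and $\mathbf{M}_2$ over the same propositional language, it is decidable whether $\mathrm{Taut}(\mathbf{M}_1)=\mathrm{Taut}(\mathbf{M}_2)$, and it is decidable whether $\mathbf{M}_1\unlhd\mathbf{M}_2$, i.e., whether $\mathrm{Taut}(\mathbf{M}_1)\subseteq\mathrm{Taut}(\mathbf{M}_2)$.
   Context: A propositional language has variables $X_1,X_2,\ldots$ and finitely many connectives with arities. A finite-valued logic $\mathbf{M}$ is given by a finite set $V(\mathbf{M})$ of truth values, designated values $V^+(\mathbf{M})\subseteq V(\mathbf{M})$, and a truth function for each connective. A valuation maps variables to truth values and extends to formulas via the truth functions; a tautology is a formula designated under every valuation; $\mathrm{Taut}(\mathbf{M})$ is the set of tautologies. *)

theory Defs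
  imports Main "HOL-Library.Nat_Bijection"
begin

datatype recf = Z | S | Proj nat | Comp recf "recf list" | Prec recf recf | Mn recf

inductive rf_eval :: "recf \<Rightarrow> nat list \<Rightarrow> nat \<Rightarrow> bool" where
  zero: "rf_eval Z xs 0"
| succ: "rf_eval S [x] (Suc x)"
| proj: "i < length xs \<Longrightarrow> rf_eval (Proj i) xs (xs ! i)"
| comp: "list_all2 (\<lambda>g y. rf_eval g xs y) gs ys \<Longrightarrow> rf_eval f ys r \<Longrightarrow> rf_eval (Comp f gs) xs r"
| prec0: "rf_eval f xs r \<Longrightarrow> rf_eval (Prec f g) (0 # xs) r"
| precS: "rf_eval (Prec f g) (y # xs) r \<Longrightarrow> rf_eval g (y # r # xs) r'
          \<Longrightarrow> rf_eval (Prec f g) (Suc y # xs) r'"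
| mn: "rf_eval f (r # xs) 0 \<Longrightarrow> (\<forall>y<r. \<exists>z. rf_eval f (y # xs) (Suc z))
          \<Longrightarrow> rf_eval (Mn f) xs r"

definition decidable_set :: "nat set \<Rightarrow> bool" where
  "decidable_set A \<longleftrightarrow> (\<exists>f. \<forall>x. rf_eval f [x] (if x \<in> A then 1 else 0))"

text \<open>A language is given by the list of arities of its connectives (connective c has arity ar ! c).
  Variables X_1, X_2, ... are Var 0, Var 1, ...\<close>
datatype form = Var nat | App nat "form list"

fun wf_form :: "nat list \<Rightarrow> form \<Rightarrow> bool" where
  "wf_form ar (Var i) = True"
| "wf_form ar (App c ts) = (c < length ar \<and> length ts = ar ! c \<and> list_all (wf_form ar) ts)"

text \<open>A finite-valued logic is a triple (n, des, tabs): truth values {0..<n}, designated values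
  set des, and for each connective c a truth table tabs ! c, listing the value at
  arguments as (a_1,...,a_k) at position given by the base-n number a_1 ... a_k.\<close>
type_synonym logic = "nat \<times> nat list \<times> nat list list"

fun tindex :: "nat \<Rightarrow> nat list \<Rightarrow> nat" where
  "tindex n [] = 0"
| "tindex n (a # as) = a * n ^ length as + tindex n as"

definition wf_logic :: "nat list \<Rightarrow> logic \<Rightarrow> bool" where
  "wf_logic ar M = (case M of (n, des, tabs) \<Rightarrow>
      0 < n \<and> set des \<subseteq> {..<n} \<and> length tabs = length ar \<and>
      (\<forall>c < length ar. length (tabs ! c) = n ^ (ar ! c) \<and> (\<forall>x \<in> set (tabs ! c). x < n)))"

fun feval :: "logic \<Rightarrow> (nat \<Rightarrow> nat) \<Rightarrow> form \<Rightarrow> nat" where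
  "feval M v (Var i) = v i"
| "feval M v (App c ts) = (case M of (n, des, tabs) \<Rightarrow> tabs ! c ! tindex n (map (feval M v) ts))"

definition Taut :: "nat list \<Rightarrow> logic \<Rightarrow> form set" where
  "Taut ar M = (case M of (n, des, tabs) \<Rightarrow>
     {\<phi>. wf_form ar \<phi> \<and> (\<forall>v. (\<forall>i. v i < n) \<longrightarrow> feval M v \<phi> \<in> set des)})"

definition encode_logic :: "logic \<Rightarrow> nat" where
  "encode_logic M = (case M of (n, des, tabs) \<Rightarrow>
     prod_encode (n, prod_encode (list_encode des, list_encode (map list_encode tabs))))"

definition encode_instance :: "nat list \<Rightarrow> logic \<Rightarrow> logic \<Rightarrow> nat" where
  "encode_instance ar M1 M2 =
     prod_encode (list_encode ar, prod_encode (encode_logic M1, encode_logic M2))"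

end

theory Submission
  imports Defs "HOL-Library.More_List"
begin

text \<open>
  If Taut(M1) is not contained in Taut(M2), there is a witness in the first n variables,
  n being the number of truth values of M2: substitute for every variable X_i of a witness the
  variable X_(v i), where v is a valuation falsifying it in M2.  A formula in n variables is
  described, for both logics at once, by the pair of its truth tables over the n-tuples of
  truth values.  The pairs that arise from formulas form the closure of the pairs of the
  variables under the connectives, acting entrywise on tables; as there are only finitely many
  pairs of tables, iterating the closure step more often than that number computes this set.
  Inclusion holds iff no pair in it is designated everywhere in M1 but not in M2, and equality
  is inclusion both ways.  The procedure uses only bounded iteration and list operations on
  natural-number codes, so it is mu-recursive.
\<close>

section \<open>Total recursive functions\<close>

definition recursive :: "nat \<Rightarrow> (nat list \<Rightarrow> nat) \<Rightarrow> bool" where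
  "recursive k f \<longleftrightarrow> (\<exists>r. \<forall>xs. length xs = k \<longrightarrow> rf_eval r xs (f xs))"

lemma recursive_cong: "recursive k f \<Longrightarrow> (\<And>xs. length xs = k \<Longrightarrow> f xs = g xs) \<Longrightarrow> recursive k g"
  unfolding recursive_def by metis

lemma recursive_proj: "i < k \<Longrightarrow> recursive k (\<lambda>xs. xs ! i)"
  unfolding recursive_def by (auto intro!: exI[of _ "Proj i"] rf_eval.proj)

lemma recursive_zero: "recursive k (\<lambda>xs. 0)"
  unfolding recursive_def by (auto intro!: exI[of _ Z] rf_eval.zero)

lemma recursive_succ: "recursive 1 (\<lambda>xs. Suc (xs ! 0))"
  unfolding recursive_def
proof (rule exI[of _ S], intro allI impI)
  fix xs :: "nat list" assume "length xs = 1"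
  then obtain x where "xs = [x]" by (cases xs) auto
  then show "rf_eval S xs (Suc (xs ! 0))" by (auto intro: rf_eval.succ)
qed

lemma recursive_comp:
  assumes f: "recursive (length gs) f" and gs: "\<forall>g\<in>set gs. recursive k g"
  shows "recursive k (\<lambda>xs. f (map (\<lambda>g. g xs) gs))"
proof -
  have "\<exists>rs. \<forall>xs. length xs = k \<longrightarrow> list_all2 (\<lambda>r g. rf_eval r xs (g xs)) rs gs"
    using gs
  proof (induction gs)
    case (Cons g gs)
    then obtain rs where "\<forall>xs. length xs = k \<longrightarrow> list_all2 (\<lambda>r g. rf_eval r xs (g xs)) rs gs"
      by auto
    moreover from Cons.prems obtain r where "\<forall>xs. length xs = k \<longrightarrow> rf_eval r xs (g xs)"
      unfolding recursive_def by auto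
    ultimately show ?case by (intro exI[of _ "r # rs"]) auto
  qed simp
  then obtain rs where rs: "\<forall>xs. length xs = k \<longrightarrow> list_all2 (\<lambda>r g. rf_eval r xs (g xs)) rs gs"
    by blast
  from f obtain rf where rf: "\<forall>ys. length ys = length gs \<longrightarrow> rf_eval rf ys (f ys)"
    unfolding recursive_def by auto
  show ?thesis unfolding recursive_def
  proof (rule exI[of _ "Comp rf rs"], intro allI impI)
    fix xs :: "nat list" assume "length xs = k"
    with rs have "list_all2 (\<lambda>r y. rf_eval r xs y) rs (map (\<lambda>g. g xs) gs)"
      by (auto simp: list_all2_map2)
    moreover have "rf_eval rf (map (\<lambda>g. g xs) gs) (f (map (\<lambda>g. g xs) gs))" using rf by simp
    ultimately show "rf_eval (Comp rf rs) xs (f (map (\<lambda>g. g xs) gs))" by (rule rf_eval.comp)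
  qed
qed

lemma recursive_rec_nat:
  assumes f: "recursive k f" and g: "recursive (Suc (Suc k)) g"
  shows "recursive (Suc k) (\<lambda>xs. rec_nat (f (tl xs)) (\<lambda>y r. g (y # r # tl xs)) (hd xs))"
proof -
  from f obtain rf where rf: "\<forall>ys. length ys = k \<longrightarrow> rf_eval rf ys (f ys)"
    unfolding recursive_def by auto
  from g obtain rg where rg: "\<forall>ys. length ys = Suc (Suc k) \<longrightarrow> rf_eval rg ys (g ys)"
    unfolding recursive_def by auto
  show ?thesis unfolding recursive_def
  proof (rule exI[of _ "Prec rf rg"], intro allI impI)
    fix xs :: "nat list" assume "length xs = Suc k"
    then obtain y ys where xs: "xs = y # ys" and ys: "length ys = k" by (cases xs) auto
    have "rf_eval (Prec rf rg) (y # ys) (rec_nat (f ys) (\<lambda>y r. g (y # r # ys)) y)"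
    proof (induction y)
      case 0 then show ?case using rf ys by (auto intro: rf_eval.prec0)
    next
      case (Suc y) then show ?case using rg ys by (auto intro: rf_eval.precS)
    qed
    then show "rf_eval (Prec rf rg) xs (rec_nat (f (tl xs)) (\<lambda>y r. g (y # r # tl xs)) (hd xs))"
      using xs by simp
  qed
qed

lemma recursive_Least:
  assumes f: "recursive (Suc k) f" and ex: "\<And>xs. length xs = k \<Longrightarrow> \<exists>r. f (r # xs) = 0"
  shows "recursive k (\<lambda>xs. LEAST r. f (r # xs) = 0)"
proof -
  from f obtain rf where rf: "\<forall>ys. length ys = Suc k \<longrightarrow> rf_eval rf ys (f ys)"
    unfolding recursive_def by auto
  show ?thesis unfolding recursive_def
  proof (rule exI[of _ "Mn rf"], intro allI impI)
    fix xs :: "nat list" assume l: "length xs = k"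
    let ?r = "LEAST r. f (r # xs) = 0"
    have "f (?r # xs) = 0" using ex[OF l] by (rule LeastI_ex)
    then have root: "rf_eval rf (?r # xs) 0" using rf l by (metis length_Cons)
    have below: "\<forall>y<?r. \<exists>z. rf_eval rf (y # xs) (Suc z)"
    proof (intro allI impI)
      fix y assume "y < ?r"
      then have "f (y # xs) \<noteq> 0" by (rule not_less_Least)
      then obtain z where "f (y # xs) = Suc z" by (cases "f (y # xs)") auto
      then show "\<exists>z. rf_eval rf (y # xs) (Suc z)" using rf l by (metis length_Cons)
    qed
    show "rf_eval (Mn rf) xs ?r" using root below by (rule rf_eval.mn)
  qed
qed

definition recursive1 :: "(nat \<Rightarrow> nat) \<Rightarrow> bool" where
  "recursive1 f \<longleftrightarrow> recursive 1 (\<lambda>xs. f (xs ! 0))"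

definition recursive2 :: "(nat \<Rightarrow> nat \<Rightarrow> nat) \<Rightarrow> bool" where
  "recursive2 f \<longleftrightarrow> recursive 2 (\<lambda>xs. f (xs ! 0) (xs ! 1))"

definition recursive3 :: "(nat \<Rightarrow> nat \<Rightarrow> nat \<Rightarrow> nat) \<Rightarrow> bool" where
  "recursive3 f \<longleftrightarrow> recursive 3 (\<lambda>xs. f (xs ! 0) (xs ! 1) (xs ! 2))"

lemma recursive_comp1: "recursive1 f \<Longrightarrow> recursive k g \<Longrightarrow> recursive k (\<lambda>xs. f (g xs))"
  unfolding recursive1_def using recursive_comp[of "[g]" "\<lambda>xs. f (xs ! 0)" k] by simp

lemma recursive_comp2:
  "recursive2 f \<Longrightarrow> recursive k g \<Longrightarrow> recursive k h \<Longrightarrow> recursive k (\<lambda>xs. f (g xs) (h xs))"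
  unfolding recursive2_def using recursive_comp[of "[g, h]" "\<lambda>xs. f (xs ! 0) (xs ! 1)" k]
  by (simp add: numeral_2_eq_2)

lemma recursive1_id: "recursive1 (\<lambda>x. x)"
  unfolding recursive1_def by (rule recursive_proj) simp

lemma recursive1_Suc: "recursive1 Suc"
  unfolding recursive1_def by (rule recursive_succ)

lemma recursive1_comp: "recursive1 f \<Longrightarrow> recursive1 g \<Longrightarrow> recursive1 (\<lambda>x. f (g x))"
  unfolding recursive1_def[of "\<lambda>x. f (g x)"]
  by (rule recursive_comp1) (auto simp: recursive1_def)

lemma recursive1_comp2:
  "recursive2 h \<Longrightarrow> recursive1 f \<Longrightarrow> recursive1 g \<Longrightarrow> recursive1 (\<lambda>x. h (f x) (g x))"
  unfolding recursive1_def[of "\<lambda>x. h (f x) (g x)"]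
  by (rule recursive_comp2) (auto simp: recursive1_def)

lemma recursive2_comp1: "recursive1 h \<Longrightarrow> recursive2 f \<Longrightarrow> recursive2 (\<lambda>x y. h (f x y))"
  unfolding recursive2_def[of "\<lambda>x y. h (f x y)"]
  by (rule recursive_comp1) (auto simp: recursive2_def)

lemma recursive2_comp2:
  "recursive2 h \<Longrightarrow> recursive2 f \<Longrightarrow> recursive2 g \<Longrightarrow> recursive2 (\<lambda>x y. h (f x y) (g x y))"
  unfolding recursive2_def[of "\<lambda>x y. h (f x y) (g x y)"]
  by (rule recursive_comp2) (auto simp: recursive2_def)

lemma recursive3_comp1: "recursive1 h \<Longrightarrow> recursive3 f \<Longrightarrow> recursive3 (\<lambda>x y z. h (f x y z))"
  unfolding recursive3_def[of "\<lambda>x y z. h (f x y z)"]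
  by (rule recursive_comp1) (auto simp: recursive3_def)

lemma recursive3_comp2:
  "recursive2 h \<Longrightarrow> recursive3 f \<Longrightarrow> recursive3 g \<Longrightarrow> recursive3 (\<lambda>x y z. h (f x y z) (g x y z))"
  unfolding recursive3_def[of "\<lambda>x y z. h (f x y z) (g x y z)"]
  by (rule recursive_comp2) (auto simp: recursive3_def)

lemma recursive2_fst: "recursive2 (\<lambda>x y. x)"
  unfolding recursive2_def by (rule recursive_proj) simp

lemma recursive2_snd: "recursive2 (\<lambda>x y. y)"
  unfolding recursive2_def by (rule recursive_proj) simp

lemma recursive3_proj:
  "recursive3 (\<lambda>x y z. x)" "recursive3 (\<lambda>x y z. y)" "recursive3 (\<lambda>x y z. z)"
  unfolding recursive3_def by (rule recursive_proj; simp)+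

lemma recursive1_const: "recursive1 (\<lambda>x. c)"
proof (induction c)
  case 0 then show ?case unfolding recursive1_def by (rule recursive_zero)
next
  case (Suc c) then show ?case using recursive1_comp[OF recursive1_Suc] by blast
qed

lemma recursive2_const: "recursive2 (\<lambda>x y. c)"
  unfolding recursive2_def by (rule recursive_comp1[OF recursive1_const recursive_zero])

lemma recursive2_rec_nat:
  assumes "recursive1 f" "recursive3 g"
  shows "recursive2 (\<lambda>y x. rec_nat (f x) (\<lambda>i r. g i r x) y)"
proof -
  have "recursive (Suc 1) (\<lambda>xs. rec_nat (f (tl xs ! 0))
      (\<lambda>y r. g ((y # r # tl xs) ! 0) ((y # r # tl xs) ! 1) ((y # r # tl xs) ! 2)) (hd xs))"
    using recursive_rec_nat[of 1 "\<lambda>xs. f (xs ! 0)" "\<lambda>xs. g (xs ! 0) (xs ! 1) (xs ! 2)"] assms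
    unfolding recursive1_def recursive3_def by (simp add: numeral_3_eq_3)
  then have "recursive 2 (\<lambda>xs. rec_nat (f (tl xs ! 0))
      (\<lambda>y r. g ((y # r # tl xs) ! 0) ((y # r # tl xs) ! 1) ((y # r # tl xs) ! 2)) (hd xs))"
    by (simp add: numeral_2_eq_2)
  then show ?thesis unfolding recursive2_def
  proof (rule recursive_cong)
    fix xs :: "nat list" assume "length xs = 2"
    then obtain a b where "xs = [a, b]" by (cases xs; cases "tl xs") (auto simp: numeral_2_eq_2)
    then show "rec_nat (f (tl xs ! 0))
        (\<lambda>y r. g ((y # r # tl xs) ! 0) ((y # r # tl xs) ! 1) ((y # r # tl xs) ! 2)) (hd xs) =
      rec_nat (f (xs ! 1)) (\<lambda>i r. g i r (xs ! 1)) (xs ! 0)" by simp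
  qed
qed

lemma recursive1_rec_nat_0:
  assumes "recursive2 g"
  shows "recursive1 (\<lambda>y. rec_nat 0 (\<lambda>i r. g i r) y)"
  using recursive1_comp2[OF recursive2_rec_nat[OF recursive1_const
        recursive3_comp2[OF assms recursive3_proj(1,2)]] recursive1_id recursive1_const] .

lemma recursive2_add: "recursive2 (\<lambda>a b. a + b)"
proof -
  have "recursive2 (\<lambda>y x. rec_nat x (\<lambda>i r. Suc r) y)"
    by (rule recursive2_rec_nat[OF recursive1_id recursive3_comp1[OF recursive1_Suc recursive3_proj(2)]])
  moreover have "rec_nat x (\<lambda>i r. Suc r) y = y + x" for x y :: nat by (induction y) auto
  ultimately show ?thesis by simp
qed

lemma recursive2_mult: "recursive2 (\<lambda>a b. a * b)"
proof -
  have "recursive2 (\<lambda>y x. rec_nat 0 (\<lambda>i r. r + x) y)"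
    by (rule recursive2_rec_nat[OF recursive1_const
          recursive3_comp2[OF recursive2_add recursive3_proj(2,3)]])
  moreover have "rec_nat 0 (\<lambda>i r. r + x) y = y * x" for x y :: nat by (induction y) auto
  ultimately show ?thesis by simp
qed

lemma recursive2_diff: "recursive2 (\<lambda>a b. a - b)"
proof -
  have "recursive1 (\<lambda>y. rec_nat 0 (\<lambda>i r. i) y)" by (rule recursive1_rec_nat_0[OF recursive2_fst])
  moreover have "rec_nat 0 (\<lambda>i r. i) y = y - 1" for y :: nat by (cases y) auto
  ultimately have pred: "recursive1 (\<lambda>y. y - 1)" by simp
  have "recursive2 (\<lambda>y x. rec_nat x (\<lambda>i r. r - 1) y)"
    by (rule recursive2_rec_nat[OF recursive1_id recursive3_comp1[OF pred recursive3_proj(2)]])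
  moreover have "rec_nat x (\<lambda>i r. r - 1) y = x - y" for x y :: nat by (induction y) auto
  ultimately have "recursive2 (\<lambda>y x. x - y)" by simp
  from recursive2_comp2[OF this recursive2_snd recursive2_fst] show ?thesis by simp
qed

lemma recursive1_triangle: "recursive1 triangle"
proof -
  have "recursive1 (\<lambda>y. rec_nat 0 (\<lambda>i r. r + Suc i) y)"
    by (rule recursive1_rec_nat_0[OF recursive2_comp2[OF recursive2_add recursive2_snd
          recursive2_comp1[OF recursive1_Suc recursive2_fst]]])
  moreover have "rec_nat 0 (\<lambda>i r. r + Suc i) y = triangle y" for y by (induction y) auto
  ultimately show ?thesis by simp
qed

lemma recursive2_prod_encode: "recursive2 (\<lambda>a b. prod_encode (a, b))"
proof -
  have "recursive2 (\<lambda>a b. triangle (a + b) + a)"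
    by (rule recursive2_comp2[OF recursive2_add
          recursive2_comp1[OF recursive1_triangle recursive2_add] recursive2_fst])
  then show ?thesis by (simp add: prod_encode_def)
qed

lemma triangle_mono: "m \<le> n \<Longrightarrow> triangle m \<le> triangle n"
  by (induction n) (auto simp: le_Suc_eq)

text \<open>The diagonal of z, i.e. a + b for z = prod_encode (a, b), is the least s with
  z < triangle (Suc s); this makes prod_decode recursive via a single unbounded search.\<close>

lemma prod_decode_via_diagonal:
  fixes z :: nat
  defines "s \<equiv> LEAST s. Suc z - triangle (Suc s) = 0"
  shows "prod_decode z = (z - triangle s, s - (z - triangle s))"
proof -
  obtain a b where ab: "prod_decode z = (a, b)" by (cases "prod_decode z")
  then have z: "z = triangle (a + b) + a"
    using prod_decode_inverse[of z] by (simp add: prod_encode_def)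
  have "s = a + b" unfolding s_def
  proof (rule Least_equality)
    show "Suc z - triangle (Suc (a + b)) = 0" using z by simp
  next
    fix y assume "Suc z - triangle (Suc y) = 0"
    then have "z < triangle (Suc y)" by simp
    show "a + b \<le> y"
    proof (rule ccontr)
      assume "\<not> a + b \<le> y"
      then have "triangle (Suc y) \<le> triangle (a + b)" by (intro triangle_mono) simp
      with \<open>z < triangle (Suc y)\<close> z show False by simp
    qed
  qed
  then show ?thesis using ab z by simp
qed

lemma recursive1_diagonal: "recursive1 (\<lambda>z. LEAST s. Suc z - triangle (Suc s) = 0)"
proof -
  have "recursive 2 (\<lambda>xs. Suc (xs ! 1) - triangle (Suc (xs ! 0)))"
    using recursive2_comp2[OF recursive2_diff recursive2_comp1[OF recursive1_Suc recursive2_snd]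
        recursive2_comp1[OF recursive1_comp[OF recursive1_triangle recursive1_Suc] recursive2_fst]]
    unfolding recursive2_def by simp
  then have "recursive 1 (\<lambda>xs. LEAST r. Suc ((r # xs) ! 1) - triangle (Suc ((r # xs) ! 0)) = 0)"
  proof (intro recursive_Least, simp add: numeral_2_eq_2)
    fix xs :: "nat list"
    have "Suc (xs ! 0) \<le> triangle (Suc (xs ! 0))" by (induction "xs ! 0") auto
    then show "\<exists>r. Suc ((r # xs) ! 1) - triangle (Suc ((r # xs) ! 0)) = 0"
      by (intro exI[of _ "xs ! 0"]) simp
  qed
  then show ?thesis unfolding recursive1_def by simp
qed

lemma recursive1_fst_prod_decode: "recursive1 (\<lambda>z. fst (prod_decode z))"
  using recursive1_comp2[OF recursive2_diff recursive1_id
      recursive1_comp[OF recursive1_triangle recursive1_diagonal]]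
  by (simp add: prod_decode_via_diagonal)

lemma recursive1_snd_prod_decode: "recursive1 (\<lambda>z. snd (prod_decode z))"
  using recursive1_comp2[OF recursive2_diff recursive1_diagonal recursive1_comp2[OF recursive2_diff
      recursive1_id recursive1_comp[OF recursive1_triangle recursive1_diagonal]]]
  by (simp add: prod_decode_via_diagonal)

lemma recursive1_if_zero:
  assumes "recursive1 a" "recursive1 b" "recursive1 c"
  shows "recursive1 (\<lambda>x. if a x = 0 then b x else c x)"
proof -
  have "recursive1 (\<lambda>x. (1 - a x) * b x + (1 - (1 - a x)) * c x)"
    by (intro recursive1_comp2[OF recursive2_add] recursive1_comp2[OF recursive2_mult]
        recursive1_comp2[OF recursive2_diff] recursive1_const assms)
  moreover have "(1 - a x) * b x + (1 - (1 - a x)) * c x = (if a x = 0 then b x else c x)" for x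
    by auto
  ultimately show ?thesis by simp
qed

lemma recursive1_rec_nat:
  assumes "recursive1 n" "recursive1 b" "recursive1 s"
  shows "recursive1 (\<lambda>x. rec_nat (b x) (\<lambda>i a. s (prod_encode (x, prod_encode (i, a)))) (n x))"
proof -
  have "recursive3 (\<lambda>i a x. s (prod_encode (x, prod_encode (i, a))))"
    by (rule recursive3_comp1[OF assms(3) recursive3_comp2[OF recursive2_prod_encode recursive3_proj(3)
          recursive3_comp2[OF recursive2_prod_encode recursive3_proj(1,2)]]])
  from recursive2_rec_nat[OF assms(2) this] show ?thesis
    by (rule recursive1_comp2[OF _ assms(1) recursive1_id])
qed

section \<open>Computable functions between encodable types\<close>

class encodable =
  fixes enc :: "'a \<Rightarrow> nat"
  assumes enc_inj: "enc x = enc y \<Longrightarrow> x = y"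

instantiation nat :: encodable
begin
definition enc_nat :: "nat \<Rightarrow> nat" where "enc_nat n = n"
instance by standard (simp add: enc_nat_def)
end

instantiation bool :: encodable
begin
definition enc_bool :: "bool \<Rightarrow> nat" where "enc_bool b = (if b then 1 else 0)"
instance by standard (auto simp: enc_bool_def split: if_splits)
end

instantiation prod :: (encodable, encodable) encodable
begin
definition enc_prod :: "'a \<times> 'b \<Rightarrow> nat" where
  "enc_prod p = prod_encode (enc (fst p), enc (snd p))"
instance by standard (auto simp: enc_prod_def prod_eq_iff dest: enc_inj)
end

instantiation list :: (encodable) encodable
begin
definition enc_list :: "'a list \<Rightarrow> nat" where "enc_list xs = list_encode (map enc xs)"
instance
proof
  fix x y :: "'a list"
  assume "enc x = enc y"
  then have "map enc x = map enc y" by (simp add: enc_list_def list_encode_eq)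
  moreover have "inj (enc :: 'a \<Rightarrow> nat)" by (rule injI) (rule enc_inj)
  ultimately show "x = y" by (simp add: inj_map_eq_map)
qed
end

lemma enc_nat [simp]: "enc (n::nat) = n"
  by (simp add: enc_nat_def)

lemma enc_bool_simps [simp]: "enc True = 1" "enc False = 0"
  by (simp_all add: enc_bool_def)

lemma enc_Pair [simp]: "enc (a, b) = prod_encode (enc a, enc b)"
  by (simp add: enc_prod_def)

lemma enc_Nil [simp]: "enc [] = 0"
  by (simp add: enc_list_def)

lemma enc_Cons [simp]: "enc (x # xs) = Suc (prod_encode (enc x, enc xs))"
  by (simp add: enc_list_def)

definition computable :: "('a::encodable \<Rightarrow> 'b::encodable) \<Rightarrow> bool" where
  "computable f \<longleftrightarrow> (\<exists>g. recursive1 g \<and> (\<forall>x. g (enc x) = enc (f x)))"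

named_theorems computable_intros

lemma computableI: "recursive1 g \<Longrightarrow> (\<And>x. g (enc x) = enc (f x)) \<Longrightarrow> computable f"
  unfolding computable_def by blast

lemma computable_lift1:
  assumes "recursive1 h" "\<And>a. h (enc a) = enc (F a)" "computable f"
  shows "computable (\<lambda>x. F (f x))"
proof -
  obtain gf where "recursive1 gf" "\<And>x. gf (enc x) = enc (f x)"
    using assms(3) unfolding computable_def by blast
  then show ?thesis
    by (intro computableI[of "\<lambda>n. h (gf n)"] recursive1_comp[OF assms(1)]) (auto simp: assms(2))
qed

lemma computable_lift2:
  assumes "recursive2 h" "\<And>a b. h (enc a) (enc b) = enc (F a b)" "computable f" "computable g"
  shows "computable (\<lambda>x. F (f x) (g x))"
proof -
  obtain gf where "recursive1 gf" "\<And>x. gf (enc x) = enc (f x)"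
    using assms(3) unfolding computable_def by blast
  moreover obtain gg where "recursive1 gg" "\<And>x. gg (enc x) = enc (g x)"
    using assms(4) unfolding computable_def by blast
  ultimately show ?thesis
    by (intro computableI[of "\<lambda>n. h (gf n) (gg n)"] recursive1_comp2[OF assms(1)]) (auto simp: assms(2))
qed

lemma computable_comp:
  assumes "computable f" "computable g"
  shows "computable (\<lambda>x. f (g x))"
proof -
  obtain gf where "recursive1 gf" "\<And>x. gf (enc x) = enc (f x)"
    using assms(1) unfolding computable_def by blast
  then show ?thesis using assms(2) by (rule computable_lift1)
qed

lemma computable_id [computable_intros]: "computable (\<lambda>x. x)"
  by (rule computableI[OF recursive1_id]) simp

lemma computable_const [computable_intros]: "computable (\<lambda>x. c)"
  by (rule computableI[OF recursive1_const]) simp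

lemma computable_enc [computable_intros]: "computable f \<Longrightarrow> computable (\<lambda>x. enc (f x))"
  unfolding computable_def by simp

lemma computable_Pair [computable_intros]:
  "computable f \<Longrightarrow> computable g \<Longrightarrow> computable (\<lambda>x. (f x, g x))"
  by (rule computable_lift2[OF recursive2_prod_encode]) simp_all

lemma computable_fst [computable_intros]: "computable f \<Longrightarrow> computable (\<lambda>x. fst (f x))"
  by (rule computable_lift1[OF recursive1_fst_prod_decode, where F = fst]) (simp_all add: enc_prod_def)

lemma computable_snd [computable_intros]: "computable f \<Longrightarrow> computable (\<lambda>x. snd (f x))"
  by (rule computable_lift1[OF recursive1_snd_prod_decode, where F = snd]) (simp_all add: enc_prod_def)

lemma computable_Cons [computable_intros]:
  "computable f \<Longrightarrow> computable g \<Longrightarrow> computable (\<lambda>x. f x # g x)"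
  by (rule computable_lift2[OF recursive2_comp1[OF recursive1_Suc recursive2_prod_encode]]) simp_all

lemma computable_add [computable_intros]:
  "computable f \<Longrightarrow> computable g \<Longrightarrow> computable (\<lambda>x. f x + g x :: nat)"
  by (rule computable_lift2[OF recursive2_add]) simp_all

lemma computable_mult [computable_intros]:
  "computable f \<Longrightarrow> computable g \<Longrightarrow> computable (\<lambda>x. f x * g x :: nat)"
  by (rule computable_lift2[OF recursive2_mult]) simp_all

lemma computable_Suc [computable_intros]: "computable f \<Longrightarrow> computable (\<lambda>x. Suc (f x))"
  by (rule computable_lift1[OF recursive1_Suc]) simp_all

lemma computable_eq [computable_intros]:
  fixes f g :: "'a::encodable \<Rightarrow> 'b::encodable"
  assumes "computable f" "computable g"
  shows "computable (\<lambda>x. f x = g x)"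
proof (rule computable_lift2[OF _ _ assms])
  show "recursive2 (\<lambda>a b. 1 - ((a - b) + (b - a)))"
    by (intro recursive2_comp2[OF recursive2_diff] recursive2_comp2[OF recursive2_add]
        recursive2_const recursive2_fst recursive2_snd)
  show "1 - ((enc a - enc b) + (enc b - enc a)) = enc (a = b)" for a b :: 'b
  proof (cases "a = b")
    case False
    then have "enc a \<noteq> enc b" using enc_inj by blast
    with False show ?thesis by simp
  qed simp
qed

lemma computable_less [computable_intros]:
  assumes "computable f" "computable g"
  shows "computable (\<lambda>x. (f x :: nat) < g x)"
proof (rule computable_lift2[OF _ _ assms, where F = "(<)"])
  show "recursive2 (\<lambda>a b. 1 - (1 - (b - a)))"
    by (intro recursive2_comp2[OF recursive2_diff] recursive2_const recursive2_fst recursive2_snd)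
qed (simp add: enc_bool_def)

lemma computable_not [computable_intros]: "computable f \<Longrightarrow> computable (\<lambda>x. \<not> f x)"
  by (rule computable_lift1[OF recursive1_comp2[OF recursive2_diff recursive1_const recursive1_id]])
    (auto simp: enc_bool_def)

lemma computable_conj [computable_intros]:
  "computable f \<Longrightarrow> computable g \<Longrightarrow> computable (\<lambda>x. f x \<and> g x)"
  by (rule computable_lift2[OF recursive2_mult]) (simp_all add: enc_bool_def)

lemma computable_imp [computable_intros]:
  "computable f \<Longrightarrow> computable g \<Longrightarrow> computable (\<lambda>x. f x \<longrightarrow> g x)"
  using computable_not[OF computable_conj[OF _ computable_not]] by simp

text \<open>Functions of several arguments, such as the branches of a case distinction or the step
  of a recursion, are given as functions on nested pairs of their arguments.\<close>

lemma computable_case_list [computable_intros]: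
  fixes f :: "'a::encodable \<Rightarrow> 'b::encodable list" and g :: "'a \<Rightarrow> 'c::encodable"
  assumes "computable f" "computable g"
    and "computable (\<lambda>p::'a \<times> 'b \<times> 'b list. h (fst p) (fst (snd p)) (snd (snd p)))"
  shows "computable (\<lambda>x. case f x of [] \<Rightarrow> g x | y # ys \<Rightarrow> h x y ys)"
proof -
  obtain gf where f: "recursive1 gf" "\<And>x. gf (enc x) = enc (f x)"
    using assms(1) unfolding computable_def by blast
  obtain gg where g: "recursive1 gg" "\<And>x. gg (enc x) = enc (g x)"
    using assms(2) unfolding computable_def by blast
  obtain gh where h: "recursive1 gh"
    "\<And>p::'a \<times> 'b \<times> 'b list. gh (enc p) = enc (h (fst p) (fst (snd p)) (snd (snd p)))"
    using assms(3) unfolding computable_def by blast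
  show ?thesis
  proof (rule computableI[of "\<lambda>n. if gf n = 0 then gg n else gh (prod_encode (n, gf n - 1))"])
    show "recursive1 (\<lambda>n. if gf n = 0 then gg n else gh (prod_encode (n, gf n - 1)))"
      by (intro recursive1_if_zero f g recursive1_comp[OF h(1)] recursive1_comp2[OF recursive2_prod_encode]
          recursive1_id recursive1_comp2[OF recursive2_diff] recursive1_const)
    show "(if gf (enc x) = 0 then gg (enc x) else gh (prod_encode (enc x, gf (enc x) - 1))) =
        enc (case f x of [] \<Rightarrow> g x | y # ys \<Rightarrow> h x y ys)" for x
      using f(2)[of x] g(2)[of x] h(2)[of "(x, hd (f x), tl (f x))"] by (cases "f x") simp_all
  qed
qed

lemma computable_rec_nat [computable_intros]:
  fixes b :: "'a::encodable \<Rightarrow> 'b::encodable" and n :: "'a \<Rightarrow> nat"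
  assumes "computable b" "computable n"
    and "computable (\<lambda>p::'a \<times> nat \<times> 'b. s (fst p) (fst (snd p)) (snd (snd p)))"
  shows "computable (\<lambda>x. rec_nat (b x) (s x) (n x))"
proof -
  obtain gb where b: "recursive1 gb" "\<And>x. gb (enc x) = enc (b x)"
    using assms(1) unfolding computable_def by blast
  obtain gn where n: "recursive1 gn" "\<And>x. gn (enc x) = enc (n x)"
    using assms(2) unfolding computable_def by blast
  obtain gs where s: "recursive1 gs"
    "\<And>p::'a \<times> nat \<times> 'b. gs (enc p) = enc (s (fst p) (fst (snd p)) (snd (snd p)))"
    using assms(3) unfolding computable_def by blast
  show ?thesis
  proof (rule computableI[OF recursive1_rec_nat[OF n(1) b(1) s(1)]])
    fix x
    have "rec_nat (gb (enc x)) (\<lambda>i a. gs (prod_encode (enc x, prod_encode (i, a)))) N =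
        enc (rec_nat (b x) (s x) N)" for N
    proof (induction N)
      case 0 then show ?case using b(2) by simp
    next
      case (Suc N) then show ?case using s(2)[of "(x, N, rec_nat (b x) (s x) N)"] by simp
    qed
    then show "rec_nat (gb (enc x)) (\<lambda>i a. gs (prod_encode (enc x, prod_encode (i, a)))) (gn (enc x)) =
        enc (rec_nat (b x) (s x) (n x))" using n(2) by simp
  qed
qed

lemma rec_nat_funpow: "rec_nat b (\<lambda>i. F) n = (F ^^ n) b"
  by (induction n) auto

lemma computable_funpow [computable_intros]:
  fixes F :: "'a::encodable \<Rightarrow> 'b::encodable \<Rightarrow> 'b"
  assumes "computable b" "computable n" "computable (\<lambda>p. F (fst p) (snd p))"
  shows "computable (\<lambda>x. (F x ^^ n x) (b x))"
proof -
  have F: "computable (\<lambda>p. F (fst p) (snd (snd p)))"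
    using computable_comp[OF assms(3), of "\<lambda>p. (fst p, snd (snd p))"] by (simp add: computable_intros)
  have "computable (\<lambda>x. rec_nat (b x) (\<lambda>i. F x) (n x))"
    by (intro computable_intros assms F)
  then show ?thesis by (simp add: rec_nat_funpow)
qed

lemma computable_tl [computable_intros]:
  assumes "computable f"
  shows "computable (\<lambda>x. tl (f x))"
proof -
  have "computable (\<lambda>x. case f x of [] \<Rightarrow> [] | y # ys \<Rightarrow> ys)"
    by (intro computable_intros assms)
  then show ?thesis by (simp add: tl_def)
qed

lemma funpow_foldl_step:
  assumes "length ys \<le> n"
  shows "((\<lambda>st. case snd st of [] \<Rightarrow> st | y # ys \<Rightarrow> (f (fst st) y, ys)) ^^ n) (a, ys) = (foldl f a ys, [])"
  using assms
proof (induction ys arbitrary: a n)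
  case Nil
  have "((\<lambda>st. case snd st of [] \<Rightarrow> st | y # ys \<Rightarrow> (f (fst st) y, ys)) ^^ m) (a, []) = (a, [])" for m
    by (induction m) auto
  then show ?case by simp
next
  case (Cons y ys)
  then obtain m where n: "n = Suc m" and "length ys \<le> m" by (cases n) auto
  with Cons.IH show ?case by (simp only: n funpow_Suc_right o_apply) simp
qed

lemma length_le_enc: "length xs \<le> enc xs"
proof (induction xs)
  case (Cons x xs)
  then show ?case using le_prod_encode_2[of "enc xs" "enc x"] by simp
qed simp

text \<open>foldl consumes one list element per step of a bounded iteration; enc xs is a
  computable bound on the number of steps needed.\<close>

lemma computable_foldl [computable_intros]:
  fixes f :: "'a::encodable \<Rightarrow> 'b::encodable \<Rightarrow> 'c::encodable \<Rightarrow> 'b"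
  assumes f: "computable (\<lambda>p. f (fst p) (fst (snd p)) (snd (snd p)))"
    and a: "computable a" and xs: "computable xs"
  shows "computable (\<lambda>x. foldl (f x) (a x) (xs x))"
proof -
  have f': "computable (\<lambda>q::('a \<times> 'b \<times> 'c list) \<times> 'c \<times> 'c list.
      f (fst (fst q)) (fst (snd (fst q))) (fst (snd q)))"
    using computable_comp[OF f, of "\<lambda>q. (fst (fst q), fst (snd (fst q)), fst (snd q))"]
    by (simp add: computable_intros)
  have "computable (\<lambda>x. fst (((\<lambda>st. case snd st of [] \<Rightarrow> st | y # ys \<Rightarrow> (f x (fst st) y, ys))
      ^^ enc (xs x)) (a x, xs x)))"
    by (intro computable_intros a xs f')
  then show ?thesis by (simp add: funpow_foldl_step length_le_enc)
qed

lemma computable_rev [computable_intros]: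
  assumes "computable xs"
  shows "computable (\<lambda>x. rev (xs x))"
proof -
  have "computable (\<lambda>x. foldl (\<lambda>a y. y # a) [] (xs x))" by (intro computable_intros assms)
  then show ?thesis by (simp add: foldl_conv_fold rev_conv_fold)
qed

lemma computable_append [computable_intros]:
  assumes "computable xs" "computable ys"
  shows "computable (\<lambda>x. xs x @ ys x)"
proof -
  have "computable (\<lambda>x. foldl (\<lambda>a y. y # a) (ys x) (rev (xs x)))" by (intro computable_intros assms)
  then show ?thesis by (simp add: foldl_conv_fold fold_Cons_rev)
qed

lemma foldl_map_acc: "foldl (\<lambda>a y. f y # a) acc xs = rev (map f xs) @ acc"
  by (induction xs arbitrary: acc) auto

lemma computable_map [computable_intros]:
  assumes "computable (\<lambda>p. f (fst p) (snd p))" "computable xs"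
  shows "computable (\<lambda>x. map (f x) (xs x))"
proof -
  have f: "computable (\<lambda>p. f (fst p) (snd (snd p)))"
    using computable_comp[OF assms(1), of "\<lambda>p. (fst p, snd (snd p))"] by (simp add: computable_intros)
  have "computable (\<lambda>x. rev (foldl (\<lambda>a y. f x y # a) [] (xs x)))"
    by (intro computable_intros assms f)
  then show ?thesis by (simp add: foldl_map_acc)
qed

lemma foldl_append_acc: "foldl (\<lambda>a ys. a @ ys) acc xss = acc @ concat xss"
  by (induction xss arbitrary: acc) auto

lemma computable_concat [computable_intros]:
  assumes "computable xss"
  shows "computable (\<lambda>x. concat (xss x))"
proof -
  have "computable (\<lambda>x. foldl (\<lambda>a ys. a @ ys) [] (xss x))" by (intro computable_intros assms)
  then show ?thesis by (simp add: foldl_append_acc)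
qed

lemma foldl_Suc_acc: "foldl (\<lambda>a y. Suc a) acc xs = acc + length xs"
  by (induction xs arbitrary: acc) auto

lemma computable_length [computable_intros]:
  assumes "computable xs"
  shows "computable (\<lambda>x. length (xs x))"
proof -
  have "computable (\<lambda>x. foldl (\<lambda>a y. Suc a) 0 (xs x))" by (intro computable_intros assms)
  then show ?thesis by (simp add: foldl_Suc_acc)
qed

lemma foldl_conj_acc: "foldl (\<lambda>a y. a \<and> P y) acc xs = (acc \<and> list_all P xs)"
  by (induction xs arbitrary: acc) auto

lemma computable_list_all [computable_intros]:
  assumes "computable (\<lambda>p. P (fst p) (snd p))" "computable xs"
  shows "computable (\<lambda>x. list_all (P x) (xs x))"
proof -
  have P: "computable (\<lambda>p. P (fst p) (snd (snd p)))"
    using computable_comp[OF assms(1), of "\<lambda>p. (fst p, snd (snd p))"] by (simp add: computable_intros)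
  have "computable (\<lambda>x. foldl (\<lambda>a y. a \<and> P x y) True (xs x))"
    by (intro computable_intros assms P)
  then show ?thesis by (simp add: foldl_conj_acc)
qed

lemma computable_member [computable_intros]:
  assumes "computable y" "computable xs"
  shows "computable (\<lambda>x. y x \<in> set (xs x))"
proof -
  have "computable (\<lambda>x. \<not> list_all (\<lambda>z. z \<noteq> y x) (xs x))"
    by (intro computable_intros assms computable_comp[OF assms(1)])
  then show ?thesis by (simp add: list_all_iff)
qed

lemma funpow_tl_eq_drop: "(tl ^^ n) xs = drop n xs"
  by (induction n) (auto simp: drop_Suc tl_drop)

lemma computable_drop [computable_intros]:
  assumes "computable n" "computable xs"
  shows "computable (\<lambda>x. drop (n x) (xs x))"
proof -
  have "computable (\<lambda>x. (tl ^^ n x) (xs x))" by (intro computable_intros assms)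
  then show ?thesis by (simp add: funpow_tl_eq_drop)
qed

lemma nth_default_conv_drop: "nth_default d xs i = (case drop i xs of [] \<Rightarrow> d | y # ys \<Rightarrow> y)"
  by (cases "i < length xs") (simp_all add: nth_default_def Cons_nth_drop_Suc[symmetric])

lemma computable_nth_default [computable_intros]:
  assumes "computable d" "computable xs" "computable i"
  shows "computable (\<lambda>x. nth_default (d x) (xs x) (i x))"
  unfolding nth_default_conv_drop by (intro computable_intros assms)

lemma computable_upt [computable_intros]:
  assumes "computable n"
  shows "computable (\<lambda>x. [0..<n x])"
proof -
  have "computable (\<lambda>x. ((\<lambda>a. a @ [length a]) ^^ n x) [])" by (intro computable_intros assms)
  moreover have "((\<lambda>a. a @ [length a]) ^^ m) [] = [0..<m]" for m by (induction m) auto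
  ultimately show ?thesis by simp
qed

lemma computable_power [computable_intros]:
  assumes "computable a" "computable n"
  shows "computable (\<lambda>x. a x ^ n x :: nat)"
proof -
  have "computable (\<lambda>x. ((\<lambda>r. r * a x) ^^ n x) 1)"
    by (intro computable_intros assms computable_comp[OF assms(1)])
  moreover have "((\<lambda>r. r * b) ^^ m) 1 = b ^ m" for m b :: nat by (induction m) auto
  ultimately show ?thesis by simp
qed

lemma funpow_n_lists: "((\<lambda>T. concat (map (\<lambda>ys. map (\<lambda>y. y # ys) xs) T)) ^^ n) [[]] = List.n_lists n xs"
  by (induction n) auto

lemma computable_n_lists [computable_intros]:
  assumes "computable n" "computable xs"
  shows "computable (\<lambda>x. List.n_lists (n x) (xs x))"
proof -
  have "computable (\<lambda>x. ((\<lambda>T. concat (map (\<lambda>ys. map (\<lambda>y. y # ys) (xs x)) T)) ^^ n x) [[]])"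
    by (intro computable_intros assms computable_comp[OF assms(2)])
  then show ?thesis by (simp add: funpow_n_lists)
qed

section \<open>Finite-valued logics and truth tables\<close>

abbreviation num_values :: "logic \<Rightarrow> nat" where "num_values M \<equiv> fst M"
abbreviation designated :: "logic \<Rightarrow> nat list" where "designated M \<equiv> fst (snd M)"
abbreviation conn_tables :: "logic \<Rightarrow> nat list list" where "conn_tables M \<equiv> snd (snd M)"

lemma feval_App:
  "feval M v (App c ts) = conn_tables M ! c ! tindex (num_values M) (map (feval M v) ts)"
  by (cases M) simp

declare feval.simps(2) [simp del] feval_App [simp]

lemma mem_Taut_iff:
  "\<phi> \<in> Taut ar M \<longleftrightarrow>
    wf_form ar \<phi> \<and> (\<forall>v. (\<forall>i. v i < num_values M) \<longrightarrow> feval M v \<phi> \<in> set (designated M))"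
  by (cases M) (simp add: Taut_def)

lemma wf_logicD:
  assumes "wf_logic ar M"
  shows "0 < num_values M" "length (conn_tables M) = length ar"
    "\<And>c. c < length ar \<Longrightarrow> length (conn_tables M ! c) = num_values M ^ (ar ! c)"
    "\<And>c x. c < length ar \<Longrightarrow> x \<in> set (conn_tables M ! c) \<Longrightarrow> x < num_values M"
  using assms by (cases M; auto simp: wf_logic_def)+

lemma wf_logic_iff_list_all:
  "wf_logic ar M \<longleftrightarrow> 0 < num_values M \<and> list_all (\<lambda>x. x < num_values M) (designated M) \<and>
    length (conn_tables M) = length ar \<and>
    list_all (\<lambda>c. length (nth_default [] (conn_tables M) c) = num_values M ^ nth_default 0 ar c \<and>
      list_all (\<lambda>x. x < num_values M) (nth_default [] (conn_tables M) c)) [0..<length ar]"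
  by (cases M) (auto simp: wf_logic_def list_all_iff nth_default_nth)

lemma tindex_less: "\<forall>a\<in>set as. a < n \<Longrightarrow> tindex n as < n ^ length as"
proof (induction as)
  case (Cons a as)
  then have "tindex n as < n ^ length as" and "Suc a \<le> n" by auto
  then have "a * n ^ length as + tindex n as < Suc a * n ^ length as" by simp
  also have "\<dots> \<le> n * n ^ length as" using \<open>Suc a \<le> n\<close> by (rule mult_right_mono) simp
  finally show ?case by simp
qed simp

lemma tindex_conv_foldl: "tindex n as = foldl (\<lambda>acc a. acc * n + a) 0 as"
proof -
  have "foldl (\<lambda>acc a. acc * n + a) acc as = acc * n ^ length as + tindex n as" for acc
    by (induction as arbitrary: acc) (auto simp: algebra_simps)
  then show ?thesis by simp
qed

lemma feval_less:
  assumes M: "wf_logic ar M" and "wf_form ar \<phi>" and v: "\<And>i. v i < num_values M"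
  shows "feval M v \<phi> < num_values M"
  using assms(2)
proof (induction \<phi>)
  case (Var i) then show ?case using v by simp
next
  case (App c ts)
  then have c: "c < length ar" and "length ts = ar ! c" and "\<forall>\<phi>\<in>set ts. feval M v \<phi> < num_values M"
    by (auto simp: list_all_iff)
  then have "tindex (num_values M) (map (feval M v) ts) < length (conn_tables M ! c)"
    using tindex_less[of "map (feval M v) ts"] wf_logicD(3)[OF M c] by simp
  then show ?case using wf_logicD(4)[OF M c] by simp
qed

fun vars_below :: "nat \<Rightarrow> form \<Rightarrow> bool" where
  "vars_below k (Var i) = (i < k)"
| "vars_below k (App c ts) = list_all (vars_below k) ts"

fun subst_form :: "(nat \<Rightarrow> form) \<Rightarrow> form \<Rightarrow> form" where
  "subst_form s (Var i) = s i"
| "subst_form s (App c ts) = App c (map (subst_form s) ts)"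

lemma feval_cong_vars_below:
  "vars_below k \<phi> \<Longrightarrow> (\<And>i. i < k \<Longrightarrow> u i = v i) \<Longrightarrow> feval M u \<phi> = feval M v \<phi>"
proof (induction \<phi>)
  case (App c ts)
  then have "map (feval M u) ts = map (feval M v) ts" by (auto simp: list_all_iff)
  then show ?case by (simp only: feval_App)
qed simp

lemma feval_subst_form: "feval M v (subst_form s \<phi>) = feval M (\<lambda>i. feval M v (s i)) \<phi>"
  by (induction \<phi>) (simp_all add: o_def cong: map_cong)

lemma wf_form_subst_form: "wf_form ar \<phi> \<Longrightarrow> (\<And>i. wf_form ar (s i)) \<Longrightarrow> wf_form ar (subst_form s \<phi>)"
  by (induction \<phi>) (auto simp: list_all_iff)

lemma vars_below_subst_form: "(\<And>i. vars_below k (s i)) \<Longrightarrow> vars_below k (subst_form s \<phi>)"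
  by (induction \<phi>) (auto simp: list_all_iff)

text \<open>If v falsifies a formula in M2, then j \<mapsto> j mod n2 falsifies its substitution
  instance X_i := X_(v i) in M2.\<close>

lemma Taut_subset_iff_vars_below:
  assumes n2: "0 < num_values M2"
  shows "Taut ar M1 \<subseteq> Taut ar M2 \<longleftrightarrow>
    (\<forall>\<phi>. vars_below (num_values M2) \<phi> \<longrightarrow> \<phi> \<in> Taut ar M1 \<longrightarrow> \<phi> \<in> Taut ar M2)"
proof (intro iffI subsetI allI impI)
  fix \<phi> assume restricted: "\<forall>\<phi>. vars_below (num_values M2) \<phi> \<longrightarrow> \<phi> \<in> Taut ar M1 \<longrightarrow> \<phi> \<in> Taut ar M2"
    and taut1: "\<phi> \<in> Taut ar M1"
  show "\<phi> \<in> Taut ar M2"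
  proof (rule ccontr)
    assume "\<phi> \<notin> Taut ar M2"
    with taut1 obtain v where v: "\<And>i. v i < num_values M2"
      and false2: "feval M2 v \<phi> \<notin> set (designated M2)"
      by (auto simp: mem_Taut_iff)
    define \<psi> where "\<psi> = subst_form (\<lambda>i. Var (v i)) \<phi>"
    have "vars_below (num_values M2) \<psi>" unfolding \<psi>_def by (rule vars_below_subst_form) (simp add: v)
    moreover have "\<psi> \<in> Taut ar M1"
      using taut1 by (auto simp: mem_Taut_iff \<psi>_def feval_subst_form intro: wf_form_subst_form)
    moreover have "feval M2 (\<lambda>j. j mod num_values M2) \<psi> = feval M2 v \<phi>"
      using v by (simp add: \<psi>_def feval_subst_form)
    then have "\<psi> \<notin> Taut ar M2"
      using false2 n2 unfolding mem_Taut_iff by (metis mod_less_divisor)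
    ultimately show False using restricted by blast
  qed
qed auto

definition assignments :: "nat \<Rightarrow> nat \<Rightarrow> nat list list" where
  "assignments n k = List.n_lists k [0..<n]"

definition formula_table :: "logic \<Rightarrow> nat \<Rightarrow> form \<Rightarrow> nat list" where
  "formula_table M k \<phi> = map (\<lambda>w. feval M (nth_default 0 w) \<phi>) (assignments (num_values M) k)"

text \<open>Entry p of every table belongs to the p-th assignment, so the table of c(t_1, ..., t_m) is
  obtained entrywise from the tables of the t_i.  Lookups use nth_default rather than (!), whose
  values out of range are unspecified, so that the procedure is computable; on well-formed
  input all indices are in range.\<close>

definition apply_conn_table :: "logic \<Rightarrow> nat \<Rightarrow> nat \<Rightarrow> nat list list \<Rightarrow> nat list" where
  "apply_conn_table M k c tbs = map (\<lambda>p. nth_default 0 (nth_default [] (conn_tables M) c)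
     (tindex (num_values M) (map (\<lambda>tb. nth_default 0 tb p) tbs))) [0..<num_values M ^ k]"

lemma length_assignments: "length (assignments n k) = n ^ k"
  by (simp add: assignments_def length_n_lists)

lemma nth_default_assignment_less:
  "w \<in> set (assignments n k) \<Longrightarrow> 0 < n \<Longrightarrow> nth_default 0 w i < n"
  by (auto simp: assignments_def set_n_lists nth_default_def dest!: nth_mem)

lemma mem_Taut_iff_formula_table:
  assumes n: "0 < num_values M" and "wf_form ar \<phi>" and vars: "vars_below k \<phi>"
  shows "\<phi> \<in> Taut ar M \<longleftrightarrow> set (formula_table M k \<phi>) \<subseteq> set (designated M)"
proof
  assume "\<phi> \<in> Taut ar M"
  then show "set (formula_table M k \<phi>) \<subseteq> set (designated M)"
    using nth_default_assignment_less[OF _ n] by (auto simp: mem_Taut_iff formula_table_def)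
next
  assume tables: "set (formula_table M k \<phi>) \<subseteq> set (designated M)"
  have "feval M v \<phi> \<in> set (designated M)" if v: "\<forall>i. v i < num_values M" for v
  proof -
    let ?w = "map v [0..<k]"
    have "?w \<in> set (assignments (num_values M) k)"
      using v by (auto simp: assignments_def set_n_lists)
    with tables have "feval M (nth_default 0 ?w) \<phi> \<in> set (designated M)"
      by (auto simp: formula_table_def)
    moreover have "feval M (nth_default 0 ?w) \<phi> = feval M v \<phi>"
      by (rule feval_cong_vars_below[OF vars]) (simp add: nth_default_nth)
    ultimately show ?thesis by simp
  qed
  then show "\<phi> \<in> Taut ar M" using \<open>wf_form ar \<phi>\<close> by (simp add: mem_Taut_iff)
qed

lemma apply_conn_table_formula_table:
  assumes M: "wf_logic ar M" and c: "c < length ar" and "length ts = ar ! c"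
    and "list_all (wf_form ar) ts"
  shows "apply_conn_table M k c (map (formula_table M k) ts) = formula_table M k (App c ts)"
proof (rule nth_equalityI)
  show "length (apply_conn_table M k c (map (formula_table M k) ts)) =
      length (formula_table M k (App c ts))"
    by (simp add: apply_conn_table_def formula_table_def length_assignments)
next
  fix p assume "p < length (apply_conn_table M k c (map (formula_table M k) ts))"
  then have p: "p < length (assignments (num_values M) k)"
    by (simp add: apply_conn_table_def length_assignments)
  let ?v = "nth_default 0 (assignments (num_values M) k ! p)"
  have "\<forall>a\<in>set (map (feval M ?v) ts). a < num_values M"
    using feval_less[OF M] nth_default_assignment_less[OF nth_mem[OF p] wf_logicD(1)[OF M]] assms(4)
    by (auto simp: list_all_iff)
  then have "tindex (num_values M) (map (feval M ?v) ts) < length (conn_tables M ! c)"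
    using tindex_less wf_logicD(3)[OF M c] assms(3) by fastforce
  then show "apply_conn_table M k c (map (formula_table M k) ts) ! p = formula_table M k (App c ts) ! p"
    using p wf_logicD(2)[OF M] c
    by (simp add: apply_conn_table_def formula_table_def length_assignments nth_default_nth o_def)
qed

lemma formula_table_mem_n_lists:
  assumes "wf_logic ar M" and "wf_form ar \<phi>"
  shows "formula_table M k \<phi> \<in> set (List.n_lists (num_values M ^ k) [0..<num_values M])"
  using feval_less[OF assms] nth_default_assignment_less[OF _ wf_logicD(1)[OF assms(1)]]
  by (auto simp: set_n_lists formula_table_def length_assignments)

section \<open>Saturation of the closure under the connectives\<close>

lemma funpow_saturates:
  assumes inflationary: "\<And>xs. set xs \<subseteq> set (f xs)"
    and set_determined: "\<And>xs ys. set xs = set ys \<Longrightarrow> set (f xs) = set (f ys)"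
    and bounded: "\<And>m. set ((f ^^ m) xs0) \<subseteq> U" and "finite U" and "card U < N"
  shows "set ((f ^^ m) xs0) \<subseteq> set ((f ^^ N) xs0)"
proof -
  let ?X = "\<lambda>m. set ((f ^^ m) xs0)"
  have mono: "?X m \<subseteq> ?X m'" if "m \<le> m'" for m m'
    using lift_Suc_mono_le[of ?X, OF _ that] inflationary by simp
  have "\<exists>t<N. ?X (Suc t) = ?X t"
  proof (rule ccontr)
    assume "\<not> (\<exists>t<N. ?X (Suc t) = ?X t)"
    then have grows: "?X t \<subset> ?X (Suc t)" if "t < N" for t
      using inflationary[of "(f ^^ t) xs0"] that by auto
    have "t \<le> card (?X t)" if "t \<le> N" for t
      using that
    proof (induction t)
      case (Suc t)
      then show ?case using psubset_card_mono[OF finite_set grows[of t]] by simp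
    qed simp
    then have "N \<le> card (?X N)" by simp
    also have "\<dots> \<le> card U" by (rule card_mono[OF \<open>finite U\<close> bounded])
    finally show False using \<open>card U < N\<close> by simp
  qed
  then obtain t where "t < N" and stable: "?X (Suc t) = ?X t" by blast
  have saturated: "?X m = ?X t" if "t \<le> m" for m
    using that
  proof (induction m)
    case (Suc m)
    show ?case
    proof (cases "t = Suc m")
      case False
      with Suc have "?X m = ?X t" by simp
      then have "?X (Suc m) = ?X (Suc t)"
        using set_determined[of "(f ^^ m) xs0" "(f ^^ t) xs0"] by simp
      with stable show ?thesis by simp
    qed simp
  qed simp
  show ?thesis
  proof (cases "m \<le> N")
    case True
    then show ?thesis by (rule mono)
  next
    case False
    then show ?thesis using saturated[of m] saturated[of N] \<open>t < N\<close> by simp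
  qed
qed

definition table_pair :: "logic \<Rightarrow> logic \<Rightarrow> nat \<Rightarrow> form \<Rightarrow> nat list \<times> nat list" where
  "table_pair M1 M2 k \<phi> = (formula_table M1 k \<phi>, formula_table M2 k \<phi>)"

definition apply_conn_pair ::
  "logic \<Rightarrow> logic \<Rightarrow> nat \<Rightarrow> nat \<Rightarrow> (nat list \<times> nat list) list \<Rightarrow> nat list \<times> nat list" where
  "apply_conn_pair M1 M2 k c es =
     (apply_conn_table M1 k c (map fst es), apply_conn_table M2 k c (map snd es))"

definition closure_step :: "nat list \<Rightarrow> logic \<Rightarrow> logic \<Rightarrow> nat \<Rightarrow>
    (nat list \<times> nat list) list \<Rightarrow> (nat list \<times> nat list) list" where
  "closure_step ar M1 M2 k ps = ps @ concat (map (\<lambda>c. map (apply_conn_pair M1 M2 k c)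
     (List.n_lists (nth_default 0 ar c) ps)) [0..<length ar])"

definition var_table_pairs :: "logic \<Rightarrow> logic \<Rightarrow> nat \<Rightarrow> (nat list \<times> nat list) list" where
  "var_table_pairs M1 M2 k = map (\<lambda>j. table_pair M1 M2 k (Var j)) [0..<k]"

text \<open>The number of iterations exceeds the number of pairs of truth tables, so the closure
  has saturated.\<close>

definition reachable_table_pairs ::
  "nat list \<Rightarrow> logic \<Rightarrow> logic \<Rightarrow> nat \<Rightarrow> (nat list \<times> nat list) list" where
  "reachable_table_pairs ar M1 M2 k =
     (closure_step ar M1 M2 k ^^ Suc (num_values M1 ^ num_values M1 ^ k * num_values M2 ^ num_values M2 ^ k))
       (var_table_pairs M1 M2 k)"

definition taut_subset_test :: "nat list \<Rightarrow> logic \<Rightarrow> logic \<Rightarrow> bool" where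
  "taut_subset_test ar M1 M2 \<longleftrightarrow>
     list_all (\<lambda>e. list_all (\<lambda>x. x \<in> set (designated M1)) (fst e) \<longrightarrow>
                    list_all (\<lambda>x. x \<in> set (designated M2)) (snd e))
       (reachable_table_pairs ar M1 M2 (num_values M2))"

lemma set_closure_step:
  "set (closure_step ar M1 M2 k ps) = set ps \<union>
     (\<Union>c<length ar. apply_conn_pair M1 M2 k c ` {es. length es = ar ! c \<and> set es \<subseteq> set ps})"
  by (auto simp: closure_step_def set_n_lists nth_default_nth)

lemma apply_conn_pair_table_pair:
  assumes "wf_logic ar M1" "wf_logic ar M2" "c < length ar" "length ts = ar ! c"
    and "list_all (wf_form ar) ts"
  shows "apply_conn_pair M1 M2 k c (map (table_pair M1 M2 k) ts) = table_pair M1 M2 k (App c ts)"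
  using apply_conn_table_formula_table[OF assms(1,3-5)] apply_conn_table_formula_table[OF assms(2-5)]
  by (simp add: apply_conn_pair_def table_pair_def o_def)

context
  fixes ar :: "nat list" and M1 M2 :: logic and k :: nat
  assumes wf1: "wf_logic ar M1" and wf2: "wf_logic ar M2"
begin

lemma closure_iterate_sound:
  "e \<in> set ((closure_step ar M1 M2 k ^^ m) (var_table_pairs M1 M2 k)) \<Longrightarrow>
     e \<in> table_pair M1 M2 k ` {\<phi>. wf_form ar \<phi> \<and> vars_below k \<phi>}"
proof (induction m arbitrary: e)
  case 0
  then show ?case by (force simp: var_table_pairs_def)
next
  case (Suc m)
  let ?S = "(closure_step ar M1 M2 k ^^ m) (var_table_pairs M1 M2 k)"
  consider "e \<in> set ?S"
    | c es where "c < length ar" "length es = ar ! c" "set es \<subseteq> set ?S" "e = apply_conn_pair M1 M2 k c es"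
    using Suc.prems by (auto simp: set_closure_step)
  then show ?case
  proof cases
    case 2
    then have "\<forall>e'\<in>set es. \<exists>\<phi>. (wf_form ar \<phi> \<and> vars_below k \<phi>) \<and> e' = table_pair M1 M2 k \<phi>"
      using Suc.IH by blast
    then obtain g where g: "\<forall>e'\<in>set es. (wf_form ar (g e') \<and> vars_below k (g e')) \<and>
        e' = table_pair M1 M2 k (g e')"
      by (metis bchoice)
    define ts where "ts = map g es"
    have es: "es = map (table_pair M1 M2 k) ts"
      unfolding ts_def map_map by (rule map_idI[symmetric]) (use g in auto)
    have ts: "\<forall>\<phi>\<in>set ts. wf_form ar \<phi> \<and> vars_below k \<phi>"
      using g by (simp add: ts_def)
    have "e = table_pair M1 M2 k (App c ts)"
      using 2 es ts apply_conn_pair_table_pair[OF wf1 wf2] by (simp add: list_all_iff)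
    moreover have "wf_form ar (App c ts) \<and> vars_below k (App c ts)"
      using 2 es ts by (simp add: list_all_iff)
    ultimately show ?thesis by blast
  qed (use Suc.IH in blast)
qed

lemma closure_iterate_mono:
  "m \<le> m' \<Longrightarrow> set ((closure_step ar M1 M2 k ^^ m) S0) \<subseteq> set ((closure_step ar M1 M2 k ^^ m') S0)"
  by (rule lift_Suc_mono_le[of "\<lambda>m. set ((closure_step ar M1 M2 k ^^ m) S0)"])
    (auto simp: set_closure_step)

lemma closure_iterate_complete:
  "wf_form ar \<phi> \<Longrightarrow> vars_below k \<phi> \<Longrightarrow>
     \<exists>m. table_pair M1 M2 k \<phi> \<in> set ((closure_step ar M1 M2 k ^^ m) (var_table_pairs M1 M2 k))"
proof (induction \<phi>)
  case (Var j)
  then have "table_pair M1 M2 k (Var j) \<in> set ((closure_step ar M1 M2 k ^^ 0) (var_table_pairs M1 M2 k))"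
    by (simp add: var_table_pairs_def)
  then show ?case by blast
next
  case (App c ts)
  let ?S = "\<lambda>m. (closure_step ar M1 M2 k ^^ m) (var_table_pairs M1 M2 k)"
  have c: "c < length ar" and len: "length ts = ar ! c"
    and ts: "\<forall>\<phi>\<in>set ts. wf_form ar \<phi> \<and> vars_below k \<phi>"
    using App.prems by (auto simp: list_all_iff)
  then obtain m where m: "\<forall>\<phi>\<in>set ts. table_pair M1 M2 k \<phi> \<in> set (?S (m \<phi>))"
    using App.IH by metis
  define M where "M = sum_list (map m ts)"
  have "table_pair M1 M2 k \<phi> \<in> set (?S M)" if "\<phi> \<in> set ts" for \<phi>
    using m that closure_iterate_mono[of "m \<phi>" M] member_le_sum_list[of "m \<phi>" "map m ts"]
    by (auto simp: M_def)
  then have "map (table_pair M1 M2 k) ts \<in> {es. length es = ar ! c \<and> set es \<subseteq> set (?S M)}"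
    using len by auto
  then have "apply_conn_pair M1 M2 k c (map (table_pair M1 M2 k) ts) \<in> set (?S (Suc M))"
    using c unfolding funpow.simps o_apply set_closure_step by blast
  moreover have "apply_conn_pair M1 M2 k c (map (table_pair M1 M2 k) ts) = table_pair M1 M2 k (App c ts)"
    using apply_conn_pair_table_pair[OF wf1 wf2 c len] ts by (simp add: list_all_iff)
  ultimately have "table_pair M1 M2 k (App c ts) \<in> set (?S (Suc M))" by simp
  then show ?case by blast
qed

lemma set_reachable_table_pairs:
  "set (reachable_table_pairs ar M1 M2 k) = table_pair M1 M2 k ` {\<phi>. wf_form ar \<phi> \<and> vars_below k \<phi>}"
proof -
  let ?tables = "\<lambda>M. set (List.n_lists (num_values M ^ k) [0..<num_values M])"
  let ?N = "num_values M1 ^ num_values M1 ^ k * num_values M2 ^ num_values M2 ^ k"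
  have "card (?tables M1 \<times> ?tables M2) \<le> ?N"
    unfolding card_cartesian_product
    by (intro mult_le_mono order.trans[OF card_length]) (simp_all add: length_n_lists)
  moreover have "set ((closure_step ar M1 M2 k ^^ m) (var_table_pairs M1 M2 k)) \<subseteq> ?tables M1 \<times> ?tables M2"
    for m
    using closure_iterate_sound formula_table_mem_n_lists[OF wf1] formula_table_mem_n_lists[OF wf2]
    by (fastforce simp: table_pair_def)
  ultimately have "set ((closure_step ar M1 M2 k ^^ m) (var_table_pairs M1 M2 k)) \<subseteq>
      set (reachable_table_pairs ar M1 M2 k)" for m
    unfolding reachable_table_pairs_def
    by (intro funpow_saturates[where U = "?tables M1 \<times> ?tables M2"]) (auto simp: set_closure_step)
  then show ?thesis
    using closure_iterate_sound closure_iterate_complete unfolding reachable_table_pairs_def by blast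
qed

end

theorem taut_subset_test_correct:
  assumes wf1: "wf_logic ar M1" and wf2: "wf_logic ar M2"
  shows "taut_subset_test ar M1 M2 \<longleftrightarrow> Taut ar M1 \<subseteq> Taut ar M2"
proof -
  let ?n2 = "num_values M2"
  have "taut_subset_test ar M1 M2 \<longleftrightarrow> (\<forall>\<phi>. wf_form ar \<phi> \<and> vars_below ?n2 \<phi> \<longrightarrow>
      set (formula_table M1 ?n2 \<phi>) \<subseteq> set (designated M1) \<longrightarrow>
      set (formula_table M2 ?n2 \<phi>) \<subseteq> set (designated M2))"
    unfolding taut_subset_test_def list_all_iff set_reachable_table_pairs[OF wf1 wf2]
    by (auto simp: table_pair_def)
  also have "\<dots> \<longleftrightarrow> (\<forall>\<phi>. vars_below ?n2 \<phi> \<longrightarrow> \<phi> \<in> Taut ar M1 \<longrightarrow> \<phi> \<in> Taut ar M2)"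
  proof -
    have "(set (formula_table M1 ?n2 \<phi>) \<subseteq> set (designated M1) \<longrightarrow>
        set (formula_table M2 ?n2 \<phi>) \<subseteq> set (designated M2)) \<longleftrightarrow>
        (\<phi> \<in> Taut ar M1 \<longrightarrow> \<phi> \<in> Taut ar M2)"
      if "wf_form ar \<phi>" "vars_below ?n2 \<phi>" for \<phi>
      using mem_Taut_iff_formula_table[OF wf_logicD(1)[OF wf1] that]
        mem_Taut_iff_formula_table[OF wf_logicD(1)[OF wf2] that] by simp
    moreover have "\<phi> \<in> Taut ar M1 \<Longrightarrow> wf_form ar \<phi>" for \<phi>
      by (simp add: mem_Taut_iff)
    ultimately show ?thesis by blast
  qed
  also have "\<dots> \<longleftrightarrow> Taut ar M1 \<subseteq> Taut ar M2"
    by (rule Taut_subset_iff_vars_below[OF wf_logicD(1)[OF wf2], symmetric])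
  finally show ?thesis .
qed

section \<open>Decidability of inclusion and equality of tautology sets\<close>

lemma computable_wf_logic [computable_intros]:
  assumes "computable ar" "computable M"
  shows "computable (\<lambda>x. wf_logic (ar x) (M x))"
  unfolding wf_logic_iff_list_all by (intro computable_intros assms assms[THEN computable_comp])

lemma computable_tindex [computable_intros]:
  assumes "computable n" "computable as"
  shows "computable (\<lambda>x. tindex (n x) (as x))"
  unfolding tindex_conv_foldl by (intro computable_intros assms assms[THEN computable_comp])

lemma computable_assignments [computable_intros]:
  assumes "computable n" "computable k"
  shows "computable (\<lambda>x. assignments (n x) (k x))"
  unfolding assignments_def by (intro computable_intros assms)

lemma computable_apply_conn_table [computable_intros]:
  assumes "computable M" "computable k" "computable c" "computable tbs"
  shows "computable (\<lambda>x. apply_conn_table (M x) (k x) (c x) (tbs x))"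
  unfolding apply_conn_table_def by (intro computable_intros assms assms[THEN computable_comp])

lemma computable_apply_conn_pair [computable_intros]:
  assumes "computable M1" "computable M2" "computable k" "computable c" "computable es"
  shows "computable (\<lambda>x. apply_conn_pair (M1 x) (M2 x) (k x) (c x) (es x))"
  unfolding apply_conn_pair_def by (intro computable_intros assms)

lemma computable_closure_step [computable_intros]:
  assumes "computable ar" "computable M1" "computable M2" "computable k" "computable ps"
  shows "computable (\<lambda>x. closure_step (ar x) (M1 x) (M2 x) (k x) (ps x))"
  unfolding closure_step_def by (intro computable_intros assms assms[THEN computable_comp])

lemma computable_var_table_pairs [computable_intros]:
  assumes "computable M1" "computable M2" "computable k"
  shows "computable (\<lambda>x. var_table_pairs (M1 x) (M2 x) (k x))"
  unfolding var_table_pairs_def table_pair_def formula_table_def feval.simps(1)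
  by (intro computable_intros assms assms[THEN computable_comp])

lemma computable_reachable_table_pairs [computable_intros]:
  assumes "computable ar" "computable M1" "computable M2" "computable k"
  shows "computable (\<lambda>x. reachable_table_pairs (ar x) (M1 x) (M2 x) (k x))"
  unfolding reachable_table_pairs_def by (intro computable_intros assms assms[THEN computable_comp])

lemma computable_taut_subset_test [computable_intros]:
  assumes "computable ar" "computable M1" "computable M2"
  shows "computable (\<lambda>x. taut_subset_test (ar x) (M1 x) (M2 x))"
  unfolding taut_subset_test_def by (intro computable_intros assms assms[THEN computable_comp])

lemma enc_nat_list: "(enc :: nat list \<Rightarrow> nat) = list_encode"
  by (rule ext) (simp add: enc_list_def enc_nat_def[abs_def])

lemma enc_logic: "enc (M :: logic) = encode_logic M"
  by (cases M) (simp add: encode_logic_def enc_nat_list enc_list_def o_def)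

lemma enc_instance: "enc (ar, M1, M2) = encode_instance ar M1 M2"
  by (simp add: encode_instance_def enc_logic enc_nat_list)

lemma encode_instance_surj: "\<exists>ar M1 M2. n = encode_instance ar M1 M2"
proof -
  have logic_surj: "\<exists>M. m = encode_logic M" for m
  proof -
    obtain a r where "prod_decode m = (a, r)" by (cases "prod_decode m")
    moreover obtain b c where "prod_decode r = (b, c)" by (cases "prod_decode r")
    ultimately have "m = encode_logic (a, list_decode b, map list_decode (list_decode c))"
      unfolding encode_logic_def by (simp add: o_def) (metis prod_decode_inverse)
    then show ?thesis by blast
  qed
  obtain a r where a: "prod_decode n = (a, r)" by (cases "prod_decode n")
  obtain m1 m2 where m: "prod_decode r = (m1, m2)" by (cases "prod_decode r")
  obtain M1 M2 where "m1 = encode_logic M1" "m2 = encode_logic M2" using logic_surj by blast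
  then have "n = encode_instance (list_decode a) M1 M2"
    unfolding encode_instance_def using a m by (metis list_decode_inverse prod_decode_inverse)
  then show ?thesis by blast
qed

lemma decidable_set_encode_instanceI:
  assumes "computable P" and P_iff: "\<And>ar M1 M2. P (ar, M1, M2) \<longleftrightarrow> Q ar M1 M2"
  shows "decidable_set {encode_instance ar M1 M2 | ar M1 M2. Q ar M1 M2}"
proof -
  let ?A = "{encode_instance ar M1 M2 | ar M1 M2. Q ar M1 M2}"
  obtain g where "recursive1 g" and g: "\<And>x. g (enc x) = enc (P x)"
    using assms(1) unfolding computable_def by blast
  then obtain r where "\<forall>xs. length xs = 1 \<longrightarrow> rf_eval r xs (g (xs ! 0))"
    unfolding recursive1_def recursive_def by blast
  then have r: "rf_eval r [n] (g n)" for n by (auto dest: spec[of _ "[n]"])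
  have g_char: "g n = (if n \<in> ?A then 1 else 0)" for n
  proof -
    obtain ar M1 M2 where n: "n = encode_instance ar M1 M2" using encode_instance_surj by blast
    have mem: "n \<in> ?A \<longleftrightarrow> Q ar M1 M2"
    proof
      assume "n \<in> ?A"
      then obtain ar' M1' M2' where n': "n = encode_instance ar' M1' M2'" and "Q ar' M1' M2'"
        by blast
      moreover have "(ar', M1', M2') = (ar, M1, M2)"
        by (rule enc_inj) (simp only: enc_instance flip: n n')
      ultimately show "Q ar M1 M2" by simp
    qed (use n in blast)
    have "g n = enc (Q ar M1 M2)"
      using g[of "(ar, M1, M2)"] by (simp only: n enc_instance P_iff)
    then show ?thesis unfolding mem by simp
  qed
  have "rf_eval r [n] (if n \<in> ?A then 1 else 0)" for n
    using r[of n] by (simp only: g_char)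
  then show ?thesis unfolding decidable_set_def by blast
qed

theorem corollary1:
  shows "decidable_set {encode_instance ar M1 M2 | ar M1 M2.
            wf_logic ar M1 \<and> wf_logic ar M2 \<and> Taut ar M1 = Taut ar M2}
       \<and> decidable_set {encode_instance ar M1 M2 | ar M1 M2.
            wf_logic ar M1 \<and> wf_logic ar M2 \<and> Taut ar M1 \<subseteq> Taut ar M2}"
proof
  let ?wf = "\<lambda>x. wf_logic (fst x) (fst (snd x)) \<and> wf_logic (fst x) (snd (snd x))"
  let ?test = "\<lambda>x. taut_subset_test (fst x) (fst (snd x)) (snd (snd x))"
  let ?test' = "\<lambda>x. taut_subset_test (fst x) (snd (snd x)) (fst (snd x))"
  show "decidable_set {encode_instance ar M1 M2 | ar M1 M2.
      wf_logic ar M1 \<and> wf_logic ar M2 \<and> Taut ar M1 = Taut ar M2}"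
    by (rule decidable_set_encode_instanceI[where P = "\<lambda>x. ?wf x \<and> ?test x \<and> ?test' x"])
      (intro computable_intros, auto simp: taut_subset_test_correct)
  show "decidable_set {encode_instance ar M1 M2 | ar M1 M2.
      wf_logic ar M1 \<and> wf_logic ar M2 \<and> Taut ar M1 \<subseteq> Taut ar M2}"
    by (rule decidable_set_encode_instanceI[where P = "\<lambda>x. ?wf x \<and> ?test x"])
      (intro computable_intros, auto simp: taut_subset_test_correct)
qed

end
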